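(* Let $1\le t_i\le t_o$ be integers and $q$ a prime power, and let $S(t_i,t_o,q)=\max\{s:\text{a linear }(t_i,t_o,s,q)\text{-AONT exists}\}$. Then there exists a $(t_i,t_o,s,q)$-AONT for every $s$ with $t_o\le s\le S(t_i,t_o,q)$.
   Context: A $(t_i,t_o,s,q)$-AONT is a $q^s\times 2s$ array over an alphabet of size $q$ (columns labelled $1,\dots,2s$) that is unbiased with respect to $\{1,\dots,s\}$, $\{s+1,\dots,2s\}$, and $I\cup J$ for every $I\subseteq\{1,\dots,s\}$ with $|I|=t_i$ and every $J\subseteq\{s+1,\dots,2s\}$ with $|J|=s-t_o$; here an $N\times k$ array is unbiased with respect to a set $D$ of columns if the rows restricted to $D$ contain every $|D|$-tuple over the alphabet exactly $N/q^{|D|}$ times. A linear $(t_i,t_o,s,q)$-AONT is the array with rows $(\mathbf{x},\mathbf{x}M^{-1})$, $\mathbf{x}\in\mathbb{F}_q^s$, for an invertible $s\times s$ matrix $M$ over $\mathbb{F}_q$, which is a $(t_i,t_o,s,q)$-AONT; equivalently $M$ is invertible and every $t_o\times t_i$ submatrix of $M$ has rank $t_i$. *)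

theory Defs
  imports Complex_Main "HOL-Library.FuncSet" "HOL-Library.Cardinality"
begin

text \<open>Arrays: rows indexed by a finite set R, columns by natural numbers
  (only columns 1..2s matter), entries in the alphabet type 'a with q = CARD('a).\<close>

definition unbiased :: "'r set \<Rightarrow> ('r \<Rightarrow> nat \<Rightarrow> 'a::finite) \<Rightarrow> nat set \<Rightarrow> bool" where
  "unbiased R A D \<longleftrightarrow>
     (\<forall>f \<in> D \<rightarrow>\<^sub>E (UNIV :: 'a set).
        real (card {r \<in> R. \<forall>c \<in> D. A r c = f c}) = real (card R) / real CARD('a) ^ card D)"

definition AONT :: "nat \<Rightarrow> nat \<Rightarrow> nat \<Rightarrow> 'r set \<Rightarrow> ('r \<Rightarrow> nat \<Rightarrow> 'a::finite) \<Rightarrow> bool" where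
  "AONT ti to s R A \<longleftrightarrow>
     finite R \<and> card R = CARD('a) ^ s \<and>
     unbiased R A {1..s} \<and> unbiased R A {s+1..2*s} \<and>
     (\<forall>I J. I \<subseteq> {1..s} \<and> card I = ti \<and> J \<subseteq> {s+1..2*s} \<and> card J = s - to
        \<longrightarrow> unbiased R A (I \<union> J))"

text \<open>The linear array with rows (x, x M^{-1}), x in F_q^s (vectors 0-indexed, x i for i < s);
  Minv is the s x s matrix M^{-1} (0-indexed entries).\<close>
definition lin_rows :: "nat \<Rightarrow> (nat \<Rightarrow> 'a) set" where
  "lin_rows s = {0..<s} \<rightarrow>\<^sub>E (UNIV :: 'a set)"

definition lin_array :: "nat \<Rightarrow> (nat \<Rightarrow> nat \<Rightarrow> 'a::field) \<Rightarrow> (nat \<Rightarrow> 'a) \<Rightarrow> nat \<Rightarrow> 'a" where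
  "lin_array s Minv x c =
     (if c \<le> s then x (c - 1) else (\<Sum>i<s. x i * Minv i (c - s - 1)))"

definition mat_inverse_pair :: "nat \<Rightarrow> (nat \<Rightarrow> nat \<Rightarrow> 'a::field) \<Rightarrow> (nat \<Rightarrow> nat \<Rightarrow> 'a) \<Rightarrow> bool" where
  "mat_inverse_pair s M N \<longleftrightarrow>
     (\<forall>i<s. \<forall>j<s. (\<Sum>k<s. M i k * N k j) = (if i = j then 1 else 0)) \<and>
     (\<forall>i<s. \<forall>j<s. (\<Sum>k<s. N i k * M k j) = (if i = j then 1 else 0))"

definition linear_AONT_exists :: "'a::{finite,field} itself \<Rightarrow> nat \<Rightarrow> nat \<Rightarrow> nat \<Rightarrow> bool" where
  "linear_AONT_exists T ti to s \<longleftrightarrow>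
     (\<exists>M Minv :: nat \<Rightarrow> nat \<Rightarrow> 'a. mat_inverse_pair s M Minv \<and>
        AONT ti to s (lin_rows s :: (nat \<Rightarrow> 'a) set) (lin_array s Minv))"

end

theory Submission
  imports Defs
begin

(* Parametrise the rows (x, x M^-1) of a linear AONT by y = x M^-1, so that a row reads (y M, y).
   The submatrix of M on rows R and columns C, |R| = |C|, defines an array of the same kind whose
   rows are the vectors supported on R, and it suffices to show that the AONT property survives
   deleting one column c together with a suitable row r.  If z M = e_c on C, any r with z_r \<noteq> 0
   keeps the (R - r) x (C - c) submatrix invertible.  The rows with y_r = 0 form the smaller array,
   i.e. it is the larger one conditioned on output column r being 0; conditioning on one column
   preserves unbiasedness of the remaining ones, so each mixed set I \<union> J of the smaller array
   inherits unbiasedness from I \<union> J \<union> {r} in the larger one.  Going from s' down to s in this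
   way yields the AONT. *)

section \<open>Equidistributed arrays\<close>

definition equidistributed :: "'p set \<Rightarrow> ('p \<Rightarrow> 'l \<Rightarrow> 'a::finite) \<Rightarrow> 'l set \<Rightarrow> bool" where
  "equidistributed P F L \<longleftrightarrow>
     (\<forall>f \<in> L \<rightarrow>\<^sub>E (UNIV :: 'a set). card {p \<in> P. \<forall>l \<in> L. F p l = f l} * CARD('a) ^ card L = card P)"

lemma unbiased_iff_equidistributed:
  fixes A :: "'r \<Rightarrow> nat \<Rightarrow> 'a::finite"
  shows "unbiased R A D \<longleftrightarrow> equidistributed R A D"
proof -
  have q: "real CARD('a) ^ card D \<noteq> 0"
    by simp
  have "real a = real b / real CARD('a) ^ card D \<longleftrightarrow> real (a * CARD('a) ^ card D) = real b" for a b
    using q by (auto simp: field_simps)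
  then show ?thesis
    unfolding unbiased_def equidistributed_def of_nat_eq_iff by simp
qed

lemma card_eq_sum_card_fibers:
  assumes "finite P" "finite L"
  shows "card P = (\<Sum>f \<in> L \<rightarrow>\<^sub>E (UNIV :: 'a::finite set). card {p \<in> P. \<forall>l \<in> L. F p l = f l})"
proof -
  have "P = (\<Union>f \<in> L \<rightarrow>\<^sub>E (UNIV :: 'a set). {p \<in> P. \<forall>l \<in> L. F p l = f l})"
    by (auto intro!: bexI[of _ "restrict (F _) L"])
  also have "card \<dots> = (\<Sum>f \<in> L \<rightarrow>\<^sub>E (UNIV :: 'a set). card {p \<in> P. \<forall>l \<in> L. F p l = f l})"
  proof (rule card_UN_disjoint)
    show "finite (L \<rightarrow>\<^sub>E (UNIV :: 'a set))"
      using assms by (simp add: finite_PiE)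
    show "\<forall>f \<in> L \<rightarrow>\<^sub>E UNIV. finite {p \<in> P. \<forall>l \<in> L. F p l = f l}"
      using assms by simp
    show "\<forall>f \<in> L \<rightarrow>\<^sub>E UNIV. \<forall>g \<in> L \<rightarrow>\<^sub>E UNIV. f \<noteq> g \<longrightarrow>
        {p \<in> P. \<forall>l \<in> L. F p l = f l} \<inter> {p \<in> P. \<forall>l \<in> L. F p l = g l} = {}"
    proof (intro ballI impI)
      fix f g :: "_ \<Rightarrow> 'a" assume f: "f \<in> L \<rightarrow>\<^sub>E UNIV" and g: "g \<in> L \<rightarrow>\<^sub>E UNIV" and "f \<noteq> g"
      then obtain l where "l \<in> L" "f l \<noteq> g l"
        using PiE_ext[OF f g] by blast
      then show "{p \<in> P. \<forall>l \<in> L. F p l = f l} \<inter> {p \<in> P. \<forall>l \<in> L. F p l = g l} = {}"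
        by auto
    qed
  qed
  finally show ?thesis .
qed

lemma equidistributed_iff_injective:
  assumes "finite P" "finite L" and card_P: "card P = CARD('a) ^ card L"
  shows "equidistributed P (F :: 'p \<Rightarrow> 'l \<Rightarrow> 'a::finite) L \<longleftrightarrow>
           (\<forall>p \<in> P. \<forall>p' \<in> P. (\<forall>l \<in> L. F p l = F p' l) \<longrightarrow> p = p')"
proof
  assume eq: "equidistributed P F L"
  show "\<forall>p \<in> P. \<forall>p' \<in> P. (\<forall>l \<in> L. F p l = F p' l) \<longrightarrow> p = p'"
  proof (intro ballI impI)
    fix p p' assume "p \<in> P" "p' \<in> P" and agree: "\<forall>l \<in> L. F p l = F p' l"
    have "card {q \<in> P. \<forall>l \<in> L. F q l = F p l} * CARD('a) ^ card L = card P"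
      using eq unfolding equidistributed_def by (drule_tac x = "restrict (F p) L" in bspec) auto
    then have "card {q \<in> P. \<forall>l \<in> L. F q l = F p l} = 1"
      using card_P by simp
    then obtain x where "{q \<in> P. \<forall>l \<in> L. F q l = F p l} = {x}"
      by (rule card_1_singletonE)
    moreover have "p \<in> {q \<in> P. \<forall>l \<in> L. F q l = F p l}" "p' \<in> {q \<in> P. \<forall>l \<in> L. F q l = F p l}"
      using \<open>p \<in> P\<close> \<open>p' \<in> P\<close> agree by auto
    ultimately show "p = p'"
      by (metis singletonD)
  qed
next
  assume inj: "\<forall>p \<in> P. \<forall>p' \<in> P. (\<forall>l \<in> L. F p l = F p' l) \<longrightarrow> p = p'"
  define \<pi> where "\<pi> p = restrict (F p) L" for p
  have "inj_on \<pi> P"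
    using inj by (intro inj_onI) (metis \<pi>_def restrict_apply')
  then have "card (\<pi> ` P) = card (L \<rightarrow>\<^sub>E (UNIV :: 'a set))"
    using card_P assms(2) by (simp add: card_image card_PiE)
  then have onto: "\<pi> ` P = L \<rightarrow>\<^sub>E UNIV"
    using assms(2) by (intro card_subset_eq) (auto simp: \<pi>_def finite_PiE)
  show "equidistributed P F L"
    unfolding equidistributed_def
  proof
    fix f :: "'l \<Rightarrow> 'a" assume "f \<in> L \<rightarrow>\<^sub>E UNIV"
    then obtain p where p: "p \<in> P" "f = \<pi> p"
      using onto by blast
    then have "{q \<in> P. \<forall>l \<in> L. F q l = f l} = {p}"
      using inj by (auto simp: \<pi>_def)
    then show "card {q \<in> P. \<forall>l \<in> L. F q l = f l} * CARD('a) ^ card L = card P"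
      using card_P by simp
  qed
qed

lemma equidistributed_fiber_nonempty:
  fixes F :: "'p \<Rightarrow> 'l \<Rightarrow> 'a::finite"
  assumes "equidistributed P F L" "f \<in> L \<rightarrow>\<^sub>E UNIV" "card P > 0"
  shows "\<exists>p \<in> P. \<forall>l \<in> L. F p l = f l"
proof -
  have "card {p \<in> P. \<forall>l \<in> L. F p l = f l} * CARD('a) ^ card L = card P"
    using assms(1,2) unfolding equidistributed_def by blast
  then have "{p \<in> P. \<forall>l \<in> L. F p l = f l} \<noteq> {}"
    using \<open>card P > 0\<close> by (intro notI) simp
  then show ?thesis
    by blast
qed

lemma equidistributed_condition:
  fixes F :: "'p \<Rightarrow> 'l \<Rightarrow> 'a::finite"
  assumes eq: "equidistributed P F (insert l\<^sub>0 L)" and "l\<^sub>0 \<notin> L" "finite P" "finite L"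
  shows "equidistributed {p \<in> P. F p l\<^sub>0 = a} F L"
proof -
  define P\<^sub>0 where "P\<^sub>0 = {p \<in> P. F p l\<^sub>0 = a}"
  have fiber: "card {p \<in> P\<^sub>0. \<forall>l \<in> L. F p l = f l} * CARD('a) ^ Suc (card L) = card P"
    if "f \<in> L \<rightarrow>\<^sub>E UNIV" for f
  proof -
    define g where "g = restrict (f(l\<^sub>0 := a)) (insert l\<^sub>0 L)"
    have "g \<in> insert l\<^sub>0 L \<rightarrow>\<^sub>E UNIV"
      by (simp add: g_def)
    then have "card {p \<in> P. \<forall>l \<in> insert l\<^sub>0 L. F p l = g l} * CARD('a) ^ card (insert l\<^sub>0 L) = card P"
      using eq unfolding equidistributed_def by blast
    moreover have "{p \<in> P. \<forall>l \<in> insert l\<^sub>0 L. F p l = g l} = {p \<in> P\<^sub>0. \<forall>l \<in> L. F p l = f l}"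
      using \<open>l\<^sub>0 \<notin> L\<close> unfolding P\<^sub>0_def g_def by auto
    ultimately show ?thesis
      using \<open>l\<^sub>0 \<notin> L\<close> \<open>finite L\<close> by simp
  qed
  show ?thesis
    unfolding equidistributed_def P\<^sub>0_def[symmetric]
  proof
    fix f :: "'l \<Rightarrow> 'a" assume f: "f \<in> L \<rightarrow>\<^sub>E UNIV"
    have "card P\<^sub>0 = (\<Sum>g \<in> L \<rightarrow>\<^sub>E (UNIV :: 'a set). card {p \<in> P\<^sub>0. \<forall>l \<in> L. F p l = g l})"
      using \<open>finite P\<close> \<open>finite L\<close> by (intro card_eq_sum_card_fibers) (simp_all add: P\<^sub>0_def)
    also have "\<dots> = (\<Sum>g \<in> L \<rightarrow>\<^sub>E (UNIV :: 'a set). card {p \<in> P\<^sub>0. \<forall>l \<in> L. F p l = f l})"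
    proof (rule sum.cong)
      fix g :: "'l \<Rightarrow> 'a" assume g: "g \<in> L \<rightarrow>\<^sub>E UNIV"
      have "CARD('a) ^ Suc (card L) \<noteq> 0"
        by simp
      moreover have "card {p \<in> P\<^sub>0. \<forall>l \<in> L. F p l = g l} * CARD('a) ^ Suc (card L) =
          card {p \<in> P\<^sub>0. \<forall>l \<in> L. F p l = f l} * CARD('a) ^ Suc (card L)"
        by (simp only: fiber[OF g] fiber[OF f])
      ultimately show "card {p \<in> P\<^sub>0. \<forall>l \<in> L. F p l = g l} = card {p \<in> P\<^sub>0. \<forall>l \<in> L. F p l = f l}"
        by simp
    qed simp
    also have "\<dots> = CARD('a) ^ card L * card {p \<in> P\<^sub>0. \<forall>l \<in> L. F p l = f l}"
      using \<open>finite L\<close> by (simp add: card_PiE)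
    finally show "card {p \<in> P\<^sub>0. \<forall>l \<in> L. F p l = f l} * CARD('a) ^ card L = card P\<^sub>0"
      by simp
  qed
qed

lemma equidistributed_reindex:
  fixes G :: "'p' \<Rightarrow> 'l' \<Rightarrow> 'a::finite" and F :: "'p \<Rightarrow> 'l \<Rightarrow> 'a"
  assumes eq: "equidistributed P' G L'"
    and \<phi>: "bij_betw \<phi> P P'" and h: "bij_betw h L L'"
    and F: "\<And>p l. p \<in> P \<Longrightarrow> l \<in> L \<Longrightarrow> F p l = G (\<phi> p) (h l)"
  shows "equidistributed P F L"
  unfolding equidistributed_def
proof
  fix f :: "'l \<Rightarrow> 'a" assume "f \<in> L \<rightarrow>\<^sub>E UNIV"
  define g where "g = restrict (\<lambda>l'. f (inv_into L h l')) L'"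
  have "g \<in> L' \<rightarrow>\<^sub>E UNIV"
    by (simp add: g_def)
  then have "card {p' \<in> P'. \<forall>l' \<in> L'. G p' l' = g l'} * CARD('a) ^ card L' = card P'"
    using eq unfolding equidistributed_def by blast
  moreover have "{p' \<in> P'. \<forall>l' \<in> L'. G p' l' = g l'} = \<phi> ` {p \<in> P. \<forall>l \<in> L. F p l = f l}"
  proof (intro set_eqI iffI)
    fix p' assume p': "p' \<in> {p' \<in> P'. \<forall>l' \<in> L'. G p' l' = g l'}"
    define p where "p = inv_into P \<phi> p'"
    have "p \<in> P" "\<phi> p = p'"
      using p' \<phi> by (auto simp: p_def bij_betw_def inv_into_into f_inv_into_f)
    moreover have "F p l = f l" if "l \<in> L" for l
      using that p' h \<open>p \<in> P\<close> \<open>\<phi> p = p'\<close>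
      by (auto simp: F g_def bij_betw_def inv_into_f_f)
    ultimately show "p' \<in> \<phi> ` {p \<in> P. \<forall>l \<in> L. F p l = f l}"
      by blast
  next
    fix p' assume "p' \<in> \<phi> ` {p \<in> P. \<forall>l \<in> L. F p l = f l}"
    then obtain p where p: "p \<in> P" "\<forall>l \<in> L. F p l = f l" and "p' = \<phi> p"
      by blast
    moreover have "G (\<phi> p) l' = g l'" if "l' \<in> L'" for l'
    proof -
      have "inv_into L h l' \<in> L" "h (inv_into L h l') = l'"
        using that h by (auto simp: bij_betw_def inv_into_into f_inv_into_f)
      then show ?thesis
        using p that F[of p "inv_into L h l'"] by (simp add: g_def)
    qed
    ultimately show "p' \<in> {p' \<in> P'. \<forall>l' \<in> L'. G p' l' = g l'}"
      using \<phi> by (auto simp: bij_betw_def)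
  qed
  moreover have "card (\<phi> ` {p \<in> P. \<forall>l \<in> L. F p l = f l}) = card {p \<in> P. \<forall>l \<in> L. F p l = f l}"
    using \<phi> by (intro card_image) (auto simp: bij_betw_def intro: inj_on_subset)
  ultimately show "card {p \<in> P. \<forall>l \<in> L. F p l = f l} * CARD('a) ^ card L = card P"
    using bij_betw_same_card[OF \<phi>] bij_betw_same_card[OF h] by simp
qed

definition AONT_on :: "nat \<Rightarrow> nat \<Rightarrow> 'p set \<Rightarrow> ('p \<Rightarrow> 'l \<Rightarrow> 'a::finite) \<Rightarrow> 'l set \<Rightarrow> 'l set \<Rightarrow> bool" where
  "AONT_on ti to P F In Out \<longleftrightarrow>
     equidistributed P F In \<and> equidistributed P F Out \<and>
     (\<forall>I J. I \<subseteq> In \<and> card I = ti \<and> J \<subseteq> Out \<and> card J = card Out - to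
        \<longrightarrow> equidistributed P F (I \<union> J))"

lemma AONT_iff_AONT_on:
  fixes A :: "'r \<Rightarrow> nat \<Rightarrow> 'a::finite"
  shows "AONT ti to s R A \<longleftrightarrow>
           finite R \<and> card R = CARD('a) ^ s \<and> AONT_on ti to R A {1..s} {s+1..2*s}"
  unfolding AONT_def AONT_on_def unbiased_iff_equidistributed by simp

lemma AONT_on_reindex:
  fixes G :: "'p' \<Rightarrow> 'l' \<Rightarrow> 'a::finite" and F :: "'p \<Rightarrow> 'l \<Rightarrow> 'a"
  assumes aont: "AONT_on ti to P' G In' Out'"
    and \<phi>: "bij_betw \<phi> P P'" and h_In: "bij_betw h In In'" and h_Out: "bij_betw h Out Out'"
    and disj: "In' \<inter> Out' = {}"
    and F: "\<And>p l. p \<in> P \<Longrightarrow> l \<in> In \<union> Out \<Longrightarrow> F p l = G (\<phi> p) (h l)"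
  shows "AONT_on ti to P F In Out"
  unfolding AONT_on_def
proof (intro conjI allI impI)
  show "equidistributed P F In"
    using aont F unfolding AONT_on_def by (intro equidistributed_reindex[OF _ \<phi> h_In]) auto
  show "equidistributed P F Out"
    using aont F unfolding AONT_on_def by (intro equidistributed_reindex[OF _ \<phi> h_Out]) auto
next
  fix I J assume IJ: "I \<subseteq> In \<and> card I = ti \<and> J \<subseteq> Out \<and> card J = card Out - to"
  have h_I: "bij_betw h I (h ` I)" and h_J: "bij_betw h J (h ` J)"
    using IJ h_In h_Out by (auto simp: bij_betw_def intro: inj_on_subset)
  have "h ` I \<subseteq> In'" "h ` J \<subseteq> Out'"
    using IJ h_In h_Out by (auto simp: bij_betw_def)
  moreover have "card (h ` I) = ti" "card (h ` J) = card Out' - to"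
    using IJ bij_betw_same_card[OF h_I] bij_betw_same_card[OF h_J] bij_betw_same_card[OF h_Out]
    by simp_all
  ultimately have "equidistributed P' G (h ` I \<union> h ` J)"
    using aont unfolding AONT_on_def by blast
  moreover have "bij_betw h (I \<union> J) (h ` I \<union> h ` J)"
    using disj \<open>h ` I \<subseteq> In'\<close> \<open>h ` J \<subseteq> Out'\<close> by (intro bij_betw_combine[OF h_I h_J]) auto
  ultimately show "equidistributed P F (I \<union> J)"
    using F IJ by (intro equidistributed_reindex[OF _ \<phi>]) auto
qed

section \<open>Finitely supported vectors\<close>

definition vecs_on :: "nat set \<Rightarrow> (nat \<Rightarrow> 'a::zero) set" where
  "vecs_on R = {y. \<forall>k. k \<notin> R \<longrightarrow> y k = 0}"

lemma bij_betw_restrict_vecs_on: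
  "bij_betw (\<lambda>y. restrict y R) (vecs_on R :: (nat \<Rightarrow> 'a::zero) set) (R \<rightarrow>\<^sub>E UNIV)"
  by (rule bij_betw_byWitness[where f' = "\<lambda>x k. if k \<in> R then x k else 0"])
    (auto simp: vecs_on_def fun_eq_iff PiE_def extensional_def)

lemma finite_vecs_on:
  assumes "finite R"
  shows "finite (vecs_on R :: (nat \<Rightarrow> 'a::{finite,zero}) set)"
  using bij_betw_finite[OF bij_betw_restrict_vecs_on[where 'a = 'a, of R]] assms
  by (simp add: finite_PiE)

lemma card_vecs_on:
  assumes "finite R"
  shows "card (vecs_on R :: (nat \<Rightarrow> 'a::{finite,zero}) set) = CARD('a) ^ card R"
  using bij_betw_same_card[OF bij_betw_restrict_vecs_on[where 'a = 'a, of R]] assms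
  by (simp add: card_PiE)

lemma vecs_on_Diff_singleton: "vecs_on (R - {r}) = {y \<in> vecs_on R. y r = 0}"
  by (auto simp: vecs_on_def)

(* The product y M for finitely supported y (see vec_mat_eq_sum); junk 0 otherwise. *)
definition vec_mat :: "(nat \<Rightarrow> 'a::semiring_0) \<Rightarrow> (nat \<Rightarrow> nat \<Rightarrow> 'a) \<Rightarrow> nat \<Rightarrow> 'a" where
  "vec_mat y M j = (\<Sum>i | y i \<noteq> 0. y i * M i j)"

lemma vec_mat_eq_sum:
  assumes "y \<in> vecs_on R" "finite R"
  shows "vec_mat y M j = (\<Sum>i \<in> R. y i * M i j)"
  unfolding vec_mat_def using assms by (intro sum.mono_neutral_left) (auto simp: vecs_on_def)

lemma vec_mat_zero [simp]: "vec_mat (\<lambda>_. 0) M j = 0"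
  by (simp add: vec_mat_def)

lemma vec_mat_diff_scaled:
  fixes M :: "nat \<Rightarrow> nat \<Rightarrow> 'a::comm_ring"
  assumes "y \<in> vecs_on R" "z \<in> vecs_on R" "finite R"
  shows "vec_mat (\<lambda>k. y k - a * z k) M j = vec_mat y M j - a * vec_mat z M j"
proof -
  have "(\<lambda>k. y k - a * z k) \<in> vecs_on R"
    using assms by (simp add: vecs_on_def)
  then show ?thesis
    using assms by (simp add: vec_mat_eq_sum algebra_simps sum_subtractf sum_distrib_left)
qed

definition indep_rows :: "(nat \<Rightarrow> nat \<Rightarrow> 'a::field) \<Rightarrow> nat set \<Rightarrow> nat set \<Rightarrow> bool" where
  "indep_rows M R C \<longleftrightarrow> (\<forall>y \<in> vecs_on R. (\<forall>j \<in> C. vec_mat y M j = 0) \<longrightarrow> y = (\<lambda>_. 0))"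

lemma indep_rows_remove:
  fixes M :: "nat \<Rightarrow> nat \<Rightarrow> 'a::field"
  assumes indep: "indep_rows M R C" and "finite R" and "c \<in> C"
    and z: "z \<in> vecs_on R" "\<And>j. j \<in> C \<Longrightarrow> vec_mat z M j = (if j = c then 1 else 0)"
  shows "\<exists>r \<in> R. indep_rows M (R - {r}) (C - {c})"
proof -
  have "z \<noteq> (\<lambda>_. 0)"
    using z(2)[OF \<open>c \<in> C\<close>] by auto
  then obtain r where "r \<in> R" "z r \<noteq> 0"
    using z(1) by (auto simp: vecs_on_def fun_eq_iff)
  have "indep_rows M (R - {r}) (C - {c})"
    unfolding indep_rows_def
  proof (intro ballI impI)
    fix y assume y: "y \<in> vecs_on (R - {r})" and yM: "\<forall>j \<in> C - {c}. vec_mat y M j = 0"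
    then have "y \<in> vecs_on R" "y r = 0"
      by (auto simp: vecs_on_Diff_singleton)
    define a where "a = vec_mat y M c"
    have "vec_mat (\<lambda>k. y k - a * z k) M j = 0" if "j \<in> C" for j
      using that yM z \<open>y \<in> vecs_on R\<close> \<open>finite R\<close>
      by (cases "j = c") (simp_all add: vec_mat_diff_scaled a_def)
    moreover have "(\<lambda>k. y k - a * z k) \<in> vecs_on R"
      using \<open>y \<in> vecs_on R\<close> z(1) by (simp add: vecs_on_def)
    ultimately have "(\<lambda>k. y k - a * z k) = (\<lambda>_. 0)"
      using indep unfolding indep_rows_def by blast
    then have "a = 0"
      using \<open>y r = 0\<close> \<open>z r \<noteq> 0\<close> by (auto simp: fun_eq_iff)
    with \<open>(\<lambda>k. y k - a * z k) = (\<lambda>_. 0)\<close> show "y = (\<lambda>_. 0)"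
      by (simp add: fun_eq_iff)
  qed
  with \<open>r \<in> R\<close> show ?thesis
    by blast
qed

(* The row (x, x M^-1) of the linear array written in terms of y = x M^-1, i.e. (y M, y):
   Inl j labels input column j and Inr i output column i. *)
definition io_array :: "(nat \<Rightarrow> nat \<Rightarrow> 'a::semiring_0) \<Rightarrow> (nat \<Rightarrow> 'a) \<Rightarrow> nat + nat \<Rightarrow> 'a" where
  "io_array M y = case_sum (vec_mat y M) y"

lemma equidistributed_inputs_iff_indep_rows:
  fixes M :: "nat \<Rightarrow> nat \<Rightarrow> 'a::{finite,field}"
  assumes "finite R" "finite C" "card R = card C"
  shows "equidistributed (vecs_on R) (io_array M) (Inl ` C) \<longleftrightarrow> indep_rows M R C"
proof -
  have "equidistributed (vecs_on R) (io_array M) (Inl ` C) \<longleftrightarrow>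
      (\<forall>y \<in> vecs_on R. \<forall>y' \<in> vecs_on R. (\<forall>j \<in> C. vec_mat y M j = vec_mat y' M j) \<longrightarrow> y = y')"
    using assms by (subst equidistributed_iff_injective)
      (simp_all add: finite_vecs_on card_vecs_on card_image io_array_def)
  also have "\<dots> \<longleftrightarrow> indep_rows M R C"
    unfolding indep_rows_def
  proof (intro iffI ballI impI)
    fix y :: "nat \<Rightarrow> 'a"
    assume inj: "\<forall>y \<in> vecs_on R. \<forall>y' \<in> vecs_on R. (\<forall>j \<in> C. vec_mat y M j = vec_mat y' M j) \<longrightarrow> y = y'"
      and "y \<in> vecs_on R" "\<forall>j \<in> C. vec_mat y M j = 0"
    moreover have "(\<lambda>_. 0) \<in> (vecs_on R :: (nat \<Rightarrow> 'a) set)"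
      by (simp add: vecs_on_def)
    ultimately show "y = (\<lambda>_. 0)"
      by simp
  next
    fix y y' :: "nat \<Rightarrow> 'a"
    assume indep: "\<forall>y \<in> vecs_on R. (\<forall>j \<in> C. vec_mat y M j = 0) \<longrightarrow> y = (\<lambda>_. 0)"
      and y: "y \<in> vecs_on R" "y' \<in> vecs_on R" and agree: "\<forall>j \<in> C. vec_mat y M j = vec_mat y' M j"
    have "(\<lambda>k. y k - 1 * y' k) \<in> vecs_on R"
      using y by (simp add: vecs_on_def)
    moreover have "\<forall>j \<in> C. vec_mat (\<lambda>k. y k - 1 * y' k) M j = 0"
      using agree vec_mat_diff_scaled[OF y \<open>finite R\<close>, of 1 M] by simp
    ultimately have "(\<lambda>k. y k - 1 * y' k) = (\<lambda>_. 0)"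
      using indep by blast
    then show "y = y'"
      by (simp add: fun_eq_iff)
  qed
  finally show ?thesis .
qed

lemma equidistributed_outputs:
  fixes M :: "nat \<Rightarrow> nat \<Rightarrow> 'a::{finite,field}"
  assumes "finite R"
  shows "equidistributed (vecs_on R) (io_array M) (Inr ` R)"
proof -
  have "finite (vecs_on R :: (nat \<Rightarrow> 'a) set)"
    "card (vecs_on R :: (nat \<Rightarrow> 'a) set) = CARD('a) ^ card (Inr ` R :: (nat + nat) set)"
    using assms by (simp_all add: finite_vecs_on card_vecs_on card_image)
  then show ?thesis
    using assms by (subst equidistributed_iff_injective)
      (auto simp: io_array_def vecs_on_def fun_eq_iff)
qed

section \<open>AONTs from submatrices\<close>

definition sub_AONT :: "(nat \<Rightarrow> nat \<Rightarrow> 'a::{finite,field}) \<Rightarrow> nat \<Rightarrow> nat \<Rightarrow> nat set \<Rightarrow> nat set \<Rightarrow> bool" where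
  "sub_AONT M ti to R C \<longleftrightarrow> finite R \<and> finite C \<and> card R = card C \<and>
     AONT_on ti to (vecs_on R) (io_array M) (Inl ` C) (Inr ` R)"

lemma sub_AONT_ex_indep_rows_remove:
  assumes sub: "sub_AONT M ti to R C" and "c \<in> C"
  shows "\<exists>r \<in> R. indep_rows M (R - {r}) (C - {c})"
proof -
  have fin: "finite R" "finite C" "card R = card C"
    and in_eq: "equidistributed (vecs_on R) (io_array M) (Inl ` C)"
    using sub unfolding sub_AONT_def AONT_on_def by auto
  then have "indep_rows M R C"
    using equidistributed_inputs_iff_indep_rows by blast
  moreover obtain z where "z \<in> vecs_on R" and z: "\<forall>l \<in> Inl ` C. io_array M z l = (if l = Inl c then 1 else 0)"
    using equidistributed_fiber_nonempty[OF in_eq, of "restrict (\<lambda>l. if l = Inl c then 1 else 0) (Inl ` C)"]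
      fin by (auto simp: card_vecs_on)
  moreover have "\<And>j. j \<in> C \<Longrightarrow> vec_mat z M j = (if j = c then 1 else 0)"
    using z by (auto simp: io_array_def)
  ultimately show ?thesis
    using indep_rows_remove fin \<open>c \<in> C\<close> by blast
qed

lemma sub_AONT_remove:
  assumes sub: "sub_AONT M ti to R C" and "to < card R" and "c \<in> C"
  shows "\<exists>r \<in> R. sub_AONT M ti to (R - {r}) (C - {c})"
proof -
  have fin: "finite R" "finite C" and card_C: "card R = card C"
    and aont: "AONT_on ti to (vecs_on R) (io_array M) (Inl ` C) (Inr ` R)"
    using sub unfolding sub_AONT_def by auto
  obtain r where "r \<in> R" and indep': "indep_rows M (R - {r}) (C - {c})"
    using sub_AONT_ex_indep_rows_remove[OF sub \<open>c \<in> C\<close>] by blast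
  have card_C': "card (R - {r}) = card (C - {c})"
    using fin card_C \<open>r \<in> R\<close> \<open>c \<in> C\<close> by simp
  have "AONT_on ti to (vecs_on (R - {r})) (io_array M) (Inl ` (C - {c})) (Inr ` (R - {r}))"
    unfolding AONT_on_def
  proof (intro conjI allI impI)
    show "equidistributed (vecs_on (R - {r})) (io_array M) (Inl ` (C - {c}))"
      using indep' card_C' fin by (simp add: equidistributed_inputs_iff_indep_rows)
    show "equidistributed (vecs_on (R - {r})) (io_array M) (Inr ` (R - {r}))"
      using fin by (simp add: equidistributed_outputs)
  next
    fix I J :: "(nat + nat) set"
    assume IJ: "I \<subseteq> Inl ` (C - {c}) \<and> card I = ti \<and>
      J \<subseteq> Inr ` (R - {r}) \<and> card J = card (Inr ` (R - {r})) - to"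
    have "finite J" "Inr r \<notin> J"
      using IJ fin finite_subset by auto
    then have "card (insert (Inr r) J) = card (Inr ` R) - to"
      using IJ fin \<open>r \<in> R\<close> \<open>to < card R\<close> by (simp add: card_image)
    moreover have "I \<subseteq> Inl ` C" "insert (Inr r) J \<subseteq> Inr ` R"
      using IJ \<open>r \<in> R\<close> by auto
    ultimately have "equidistributed (vecs_on R) (io_array M) (insert (Inr r) (I \<union> J))"
      using aont IJ unfolding AONT_on_def by (metis Un_insert_right)
    moreover have "Inr r \<notin> I \<union> J" "finite (I \<union> J)"
      using IJ fin \<open>finite J\<close> \<open>Inr r \<notin> J\<close> finite_subset by auto
    \<comment> \<open>the smaller array is the larger one conditioned on output column r being 0\<close>
    ultimately have "equidistributed {y \<in> vecs_on R. io_array M y (Inr r) = 0} (io_array M) (I \<union> J)"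
      using fin by (intro equidistributed_condition) (auto simp: finite_vecs_on)
    then show "equidistributed (vecs_on (R - {r})) (io_array M) (I \<union> J)"
      by (simp add: vecs_on_Diff_singleton io_array_def)
  qed
  then show ?thesis
    using fin card_C' \<open>r \<in> R\<close> unfolding sub_AONT_def by blast
qed

lemma sub_AONT_shrink:
  assumes "sub_AONT M ti to R C" "to \<le> s" "s \<le> card R"
  shows "\<exists>R' C'. sub_AONT M ti to R' C' \<and> card R' = s"
  using assms
proof (induction "card R - s" arbitrary: R C)
  case 0
  then show ?case
    by (metis diff_is_0_eq le_antisym)
next
  case (Suc k)
  have "finite R" "card R = card C"
    using Suc.prems(1) unfolding sub_AONT_def by auto
  then obtain c where "c \<in> C"
    using Suc.hyps(2) by fastforce
  moreover have "to < card R"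
    using Suc.hyps(2) Suc.prems(2) by linarith
  ultimately obtain r where "r \<in> R" and sub: "sub_AONT M ti to (R - {r}) (C - {c})"
    using sub_AONT_remove[OF Suc.prems(1)] by blast
  have "card (R - {r}) = card R - 1"
    using \<open>finite R\<close> \<open>r \<in> R\<close> by simp
  then show ?case
    using Suc.hyps Suc.prems(2) by (intro Suc.hyps(1)[OF _ sub]) linarith+
qed

lemma sum_mult_inverse_cancel:
  fixes A B :: "nat \<Rightarrow> nat \<Rightarrow> 'a::comm_ring_1"
  assumes AB: "\<forall>i<n. \<forall>j<n. (\<Sum>k<n. A i k * B k j) = (if i = j then 1 else 0)" and "j < n"
  shows "(\<Sum>k<n. (\<Sum>i<n. x i * A i k) * B k j) = x j"
proof -
  have "(\<Sum>k<n. (\<Sum>i<n. x i * A i k) * B k j) = (\<Sum>k<n. \<Sum>i<n. x i * (A i k * B k j))"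
    by (simp add: sum_distrib_right mult.assoc)
  also have "\<dots> = (\<Sum>i<n. x i * (\<Sum>k<n. A i k * B k j))"
    by (subst sum.swap) (simp add: sum_distrib_left)
  also have "\<dots> = (\<Sum>i<n. if i = j then x i else 0)"
    using AB \<open>j < n\<close> by (intro sum.cong) auto
  also have "\<dots> = x j"
    using \<open>j < n\<close> by simp
  finally show ?thesis .
qed

lemma sub_AONT_of_linear_AONT:
  fixes M N :: "nat \<Rightarrow> nat \<Rightarrow> 'a::{finite,field}"
  assumes inv: "mat_inverse_pair n M N"
    and aont: "AONT ti to n (lin_rows n :: (nat \<Rightarrow> 'a) set) (lin_array n N)"
  shows "sub_AONT M ti to {..<n} {..<n}"
proof -
  have MN: "\<forall>i<n. \<forall>j<n. (\<Sum>k<n. M i k * N k j) = (if i = j then 1 else 0)"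
    and NM: "\<forall>i<n. \<forall>j<n. (\<Sum>k<n. N i k * M k j) = (if i = j then 1 else 0)"
    using inv unfolding mat_inverse_pair_def by auto
  define \<phi> where "\<phi> y = restrict (vec_mat y M) {0..<n}" for y :: "nat \<Rightarrow> 'a"
  define \<psi> where "\<psi> x j = (if j < n then \<Sum>i<n. x i * N i j else 0)" for x :: "nat \<Rightarrow> 'a" and j
  have vec_mat_n: "vec_mat y M j = (\<Sum>i<n. y i * M i j)" if "y \<in> vecs_on {..<n}" for y j
    using that by (simp add: vec_mat_eq_sum)
  have \<phi>_N: "(\<Sum>i<n. \<phi> y i * N i j) = y j" if "y \<in> vecs_on {..<n}" "j < n" for y j
    using that sum_mult_inverse_cancel[OF MN, of j y] by (simp add: \<phi>_def vec_mat_n)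
  have bij: "bij_betw \<phi> (vecs_on {..<n}) (lin_rows n)"
  proof (rule bij_betw_byWitness[where f' = \<psi>])
    show "\<forall>y \<in> vecs_on {..<n}. \<psi> (\<phi> y) = y"
      by (auto simp: \<psi>_def \<phi>_N fun_eq_iff vecs_on_def)
    have "\<psi> x \<in> vecs_on {..<n}" for x
      by (simp add: \<psi>_def vecs_on_def)
    then show "\<forall>x \<in> lin_rows n. \<phi> (\<psi> x) = x"
      using sum_mult_inverse_cancel[OF NM]
      by (auto simp: lin_rows_def \<phi>_def vec_mat_n \<psi>_def fun_eq_iff PiE_def extensional_def)
    show "\<phi> ` vecs_on {..<n} \<subseteq> lin_rows n" "\<psi> ` lin_rows n \<subseteq> vecs_on {..<n}"
      by (auto simp: \<phi>_def lin_rows_def \<psi>_def vecs_on_def)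
  qed
  define h where "h = case_sum Suc (\<lambda>r. n + Suc r)"
  have h_In: "bij_betw h (Inl ` {..<n}) {1..n}"
    by (rule bij_betw_byWitness[where f' = "\<lambda>c. Inl (c - 1)"]) (auto simp: h_def)
  have h_Out: "bij_betw h (Inr ` {..<n}) {n+1..2*n}"
    by (rule bij_betw_byWitness[where f' = "\<lambda>c. Inr (c - n - 1)"]) (auto simp: h_def)
  have "AONT_on ti to (lin_rows n) (lin_array n N) {1..n} {n+1..2*n}"
    using aont by (simp add: AONT_iff_AONT_on)
  then have "AONT_on ti to (vecs_on {..<n}) (io_array M) (Inl ` {..<n}) (Inr ` {..<n})"
  proof (rule AONT_on_reindex[OF _ bij h_In h_Out])
    fix y :: "nat \<Rightarrow> 'a" and l assume "y \<in> vecs_on {..<n}" "l \<in> Inl ` {..<n} \<union> Inr ` {..<n}"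
    then show "io_array M y l = lin_array n N (\<phi> y) (h l)"
      by (auto simp: io_array_def lin_array_def h_def \<phi>_N) (simp add: \<phi>_def)
  qed auto
  then show ?thesis
    by (simp add: sub_AONT_def)
qed

lemma AONT_of_sub_AONT:
  fixes M :: "nat \<Rightarrow> nat \<Rightarrow> 'a::{finite,field}"
  assumes "sub_AONT M ti to R C"
  shows "\<exists>A :: nat \<Rightarrow> nat \<Rightarrow> 'a. AONT ti to (card R) {..<CARD('a) ^ card R} A"
proof -
  define s where "s = card R"
  have fin: "finite R" "finite C" and "card C = s"
    and aont: "AONT_on ti to (vecs_on R) (io_array M) (Inl ` C) (Inr ` R)"
    using assms unfolding sub_AONT_def s_def by auto
  obtain g where g: "bij_betw g {..<CARD('a) ^ s} (vecs_on R :: (nat \<Rightarrow> 'a) set)"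
    using finite_same_card_bij[of "{..<CARD('a) ^ s}" "vecs_on R :: (nat \<Rightarrow> 'a) set"] fin
    by (auto simp: finite_vecs_on card_vecs_on s_def)
  obtain e\<^sub>1 where e\<^sub>1: "bij_betw e\<^sub>1 {1..s} C"
    using finite_same_card_bij[of "{1..s}" C] fin \<open>card C = s\<close> by auto
  obtain e\<^sub>2 where e\<^sub>2: "bij_betw e\<^sub>2 {s+1..2*s} R"
    using finite_same_card_bij[of "{s+1..2*s}" R] fin by (auto simp: s_def)
  define h where "h c = (if c \<le> s then Inl (e\<^sub>1 c) else Inr (e\<^sub>2 c))" for c
  have "bij_betw (Inl \<circ> e\<^sub>1) {1..s} (Inl ` C)"
    by (rule bij_betw_trans[OF e\<^sub>1]) (simp add: bij_betw_def)
  then have h_In: "bij_betw h {1..s} (Inl ` C)"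
    by (rule bij_betw_cong[THEN iffD1, rotated]) (simp add: h_def)
  have "bij_betw (Inr \<circ> e\<^sub>2) {s+1..2*s} (Inr ` R)"
    by (rule bij_betw_trans[OF e\<^sub>2]) (simp add: bij_betw_def)
  then have h_Out: "bij_betw h {s+1..2*s} (Inr ` R)"
    by (rule bij_betw_cong[THEN iffD1, rotated]) (simp add: h_def)
  define A where "A k c = io_array M (g k) (h c)" for k c
  have "AONT_on ti to {..<CARD('a) ^ s} A {1..s} {s+1..2*s}"
    by (rule AONT_on_reindex[OF aont g h_In h_Out]) (auto simp: A_def)
  then have "AONT ti to s {..<CARD('a) ^ s} A"
    by (simp add: AONT_iff_AONT_on)
  then show ?thesis
    unfolding s_def by blast
qed

theorem mainTheorem18:
  fixes ti to s s' :: nat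
  assumes "1 \<le> ti" and "ti \<le> to"
    and "linear_AONT_exists TYPE('a::{finite,field}) ti to s'"
    and "to \<le> s" and "s \<le> s'"
  shows "\<exists>A :: nat \<Rightarrow> nat \<Rightarrow> 'a. AONT ti to s {..<CARD('a) ^ s} A"
proof -
  obtain M N :: "nat \<Rightarrow> nat \<Rightarrow> 'a" where "mat_inverse_pair s' M N"
    and "AONT ti to s' (lin_rows s' :: (nat \<Rightarrow> 'a) set) (lin_array s' N)"
    using assms(3) unfolding linear_AONT_exists_def by blast
  then have "sub_AONT M ti to {..<s'} {..<s'}"
    by (rule sub_AONT_of_linear_AONT)
  then obtain R C where "sub_AONT M ti to R C" and "card R = s"
    using sub_AONT_shrink \<open>to \<le> s\<close> \<open>s \<le> s'\<close> by (metis card_lessThan)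
  then show ?thesis
    using AONT_of_sub_AONT by metis
qed

end
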